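(* Let $(G,t)$ be a non-trivial problem instance, $X$ a modulator of $G$, $C$ a connected component of $G-X$, $T$ the block-cut tree of $C$, and $B$ a block of $C$ that is a leaf of $T$ with unique neighbour $a$ in $T$. Let $W=N_G(V(B)\setminus\{a\})\setminus\{a\}$. Suppose $W$ is a limit-1 subset for $(G-V(B),t)$ and every $x\in W$ satisfies $\mathrm{tw}\big(G[V(B)\cup\{x\}]\cup\{ax\}\big)\le 2$. Let $G'$ be obtained from $G$ by contracting $B$ into $a$ (replacing $V(B)$ by the single vertex $a$ adjacent to all of $N_G(V(B))$). Then $(G,t)$ has a solution if and only if $(G',t)$ has a solution.
   Context: $\mathrm{tw}$ is treewidth. A solution for $(G,t)$ is $S\subseteq V(G)$ with $|S|\le t$ and $\mathrm{tw}(G-S)\le 2$. A modulator of $G$ is $X$ with $\mathrm{tw}(G-X)\le 2$. $Z$ is a limit-1 subset for $(G,t)$ if every solution $S$ has $|Z\setminus S|\le 1$. $(G,t)$ is trivial if $|V(G)|\le 4$, or $\mathrm{tw}(G)\le 2$, or $t=0$, or some connected subgraph $H$ satisfies $\mathrm{tw}\big(G[N_G[H]]\cup\binom{N_G(H)}{2}\big)\le 2$ ($N_G(H)$: vertices outside $H$ adjacent to $H$; $N_G[H]=V(H)\cup N_G(H)$; $\cup\binom{N_G(H)}{2}$ adds all edges among $N_G(H)$); otherwise non-trivial. For $U\subseteq V(G)$, $N_G(U)$ is the set of vertices outside $U$ adjacent to $U$. A block of a connected graph is a maximal biconnected subgraph (biconnected = connected without articulation vertex); the block-cut tree of a connected graph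 $C$ is the bipartite tree whose nodes are the articulation vertices of $C$ and the blocks of $C$, with articulation vertex $a$ adjacent to block $B$ iff $a\in V(B)$. For a graph $F$ and vertex pair $ax$, $F\cup\{ax\}$ is $F$ with edge $ax$ added. *)

theory Defs
  imports Main
begin

type_synonym 'a graph = "'a set \<times> 'a set set"

definition verts :: "'a graph \<Rightarrow> 'a set" where "verts G = fst G"
definition edges :: "'a graph \<Rightarrow> 'a set set" where "edges G = snd G"

definition wf_graph :: "'a graph \<Rightarrow> bool" where
  "wf_graph G \<longleftrightarrow> finite (verts G) \<and>
     (\<forall>e\<in>edges G. \<exists>u v. e = {u, v} \<and> u \<noteq> v \<and> u \<in> verts G \<and> v \<in> verts G)"

definition adj :: "'a graph \<Rightarrow> 'a \<Rightarrow> 'a \<Rightarrow> bool" where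
  "adj G u v \<longleftrightarrow> u \<noteq> v \<and> {u, v} \<in> edges G"

definition induce :: "'a graph \<Rightarrow> 'a set \<Rightarrow> 'a graph" where
  "induce G U = (verts G \<inter> U, {e \<in> edges G. e \<subseteq> U})"

definition del :: "'a graph \<Rightarrow> 'a set \<Rightarrow> 'a graph" where
  "del G S = induce G (verts G - S)"

text \<open>Connectivity (the empty graph counts as connected; nonemptiness is required explicitly where needed).\<close>
definition connected :: "'a graph \<Rightarrow> bool" where
  "connected G \<longleftrightarrow> (\<forall>u\<in>verts G. \<forall>v\<in>verts G. (adj G)\<^sup>*\<^sup>* u v)"

definition nbhd :: "'a graph \<Rightarrow> 'a set \<Rightarrow> 'a set" where
  "nbhd G U = {v \<in> verts G - U. \<exists>u\<in>U. adj G u v}"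

definition closed_nbhd :: "'a graph \<Rightarrow> 'a set \<Rightarrow> 'a set" where
  "closed_nbhd G U = (verts G \<inter> U) \<union> nbhd G U"

definition add_clique :: "'a graph \<Rightarrow> 'a set \<Rightarrow> 'a graph" where
  "add_clique G Z = (verts G, edges G \<union> {{u, v} | u v. u \<in> Z \<and> v \<in> Z \<and> u \<noteq> v})"

definition add_edge :: "'a graph \<Rightarrow> 'a \<Rightarrow> 'a \<Rightarrow> 'a graph" where
  "add_edge G a x = (verts G \<union> {a, x}, insert {a, x} (edges G))"

definition is_tree :: "nat graph \<Rightarrow> bool" where
  "is_tree T \<longleftrightarrow> wf_graph T \<and> verts T \<noteq> {} \<and> connected T \<and>
     card (edges T) = card (verts T) - 1"

definition tree_decomp :: "'a graph \<Rightarrow> nat graph \<Rightarrow> (nat \<Rightarrow> 'a set) \<Rightarrow> bool" where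
  "tree_decomp G T bag \<longleftrightarrow> is_tree T \<and>
     (\<forall>i\<in>verts T. bag i \<subseteq> verts G) \<and>
     (\<forall>v\<in>verts G. \<exists>i\<in>verts T. v \<in> bag i) \<and>
     (\<forall>e\<in>edges G. \<exists>i\<in>verts T. e \<subseteq> bag i) \<and>
     (\<forall>v\<in>verts G. connected (induce T {i. v \<in> bag i}))"

definition td_width :: "nat graph \<Rightarrow> (nat \<Rightarrow> 'a set) \<Rightarrow> nat" where
  "td_width T bag = Max ((\<lambda>i. card (bag i)) ` verts T) - 1"

definition treewidth :: "'a graph \<Rightarrow> nat" where
  "treewidth G = (LEAST k. \<exists>T bag. tree_decomp G T bag \<and> td_width T bag = k)"

definition solution :: "'a graph \<Rightarrow> nat \<Rightarrow> 'a set \<Rightarrow> bool" where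
  "solution G t S \<longleftrightarrow> S \<subseteq> verts G \<and> card S \<le> t \<and> treewidth (del G S) \<le> 2"

definition modulator :: "'a graph \<Rightarrow> 'a set \<Rightarrow> bool" where
  "modulator G X \<longleftrightarrow> treewidth (del G X) \<le> 2"

definition limit1 :: "'a graph \<Rightarrow> nat \<Rightarrow> 'a set \<Rightarrow> bool" where
  "limit1 G t Z \<longleftrightarrow> (\<forall>S. solution G t S \<longrightarrow> card (Z - S) \<le> 1)"

definition trivial_inst :: "'a graph \<Rightarrow> nat \<Rightarrow> bool" where
  "trivial_inst G t \<longleftrightarrow> card (verts G) \<le> 4 \<or> treewidth G \<le> 2 \<or> t = 0 \<or>
     (\<exists>H. H \<noteq> {} \<and> H \<subseteq> verts G \<and> connected (induce G H) \<and>
        treewidth (add_clique (induce G (closed_nbhd G H)) (nbhd G H)) \<le> 2)"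

definition component :: "'a graph \<Rightarrow> 'a set \<Rightarrow> bool" where
  "component G C \<longleftrightarrow> C \<noteq> {} \<and> C \<subseteq> verts G \<and> connected (induce G C) \<and>
     (\<forall>D. C \<subseteq> D \<and> D \<subseteq> verts G \<and> connected (induce G D) \<longrightarrow> D = C)"

text \<open>Articulation vertices, biconnectivity, blocks (blocks are maximal biconnected
  subgraphs; these are induced, so we represent them by their vertex sets).\<close>
definition articulation :: "'a graph \<Rightarrow> 'a \<Rightarrow> bool" where
  "articulation G v \<longleftrightarrow> v \<in> verts G \<and> \<not> connected (del G {v})"

definition biconnected :: "'a graph \<Rightarrow> bool" where
  "biconnected G \<longleftrightarrow> connected G \<and> (\<forall>v. \<not> articulation G v)"

definition is_block :: "'a graph \<Rightarrow> 'a set \<Rightarrow> bool" where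
  "is_block G U \<longleftrightarrow> U \<subseteq> verts G \<and> biconnected (induce G U) \<and>
     (\<forall>U'. U \<subseteq> U' \<and> U' \<subseteq> verts G \<and> biconnected (induce G U') \<longrightarrow> U' = U)"

definition bc_tree :: "'a graph \<Rightarrow> ('a + 'a set) graph" where
  "bc_tree G = ({Inl a | a. articulation G a} \<union> {Inr U | U. is_block G U},
               {{Inl a, Inr U} | a U. articulation G a \<and> is_block G U \<and> a \<in> U})"

definition contract :: "'a graph \<Rightarrow> 'a set \<Rightarrow> 'a \<Rightarrow> 'a graph" where
  "contract G B a = ((verts G - B) \<union> {a},
     {e \<in> edges G. e \<inter> B = {}} \<union> {{a, v} | v. v \<in> nbhd G B})"

end

theory Submission
  imports Defs
begin

text \<open>Contracting the connected set \<open>B\<close> into \<open>a\<close> takes a minor, so a solution \<open>S\<close> of \<open>G\<close>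
  gives one of the contracted graph \<open>G'\<close>: \<open>S\<close> itself if it avoids \<open>B\<close>, and otherwise \<open>S\<close> with
  \<open>S \<inter> B\<close> replaced by \<open>a\<close>. Conversely, if \<open>S\<close> solves \<open>G'\<close> then \<open>S - {a}\<close> solves \<open>G - B\<close>,
  so by the limit-1 hypothesis at most one private neighbour \<open>x\<close> of \<open>B - {a}\<close> survives in
  \<open>G - S\<close>. Then \<open>G - S\<close> is covered by \<open>G' - S\<close> and by the block plus \<open>x\<close> with the edge
  \<open>ax\<close> added; both have treewidth at most 2 and they meet in the clique \<open>{a, x} - S\<close> of at
  most two vertices, along which tree decompositions can be glued.\<close>

lemma verts_pair [simp]: "verts (V, E) = V" by (simp add: verts_def)
lemma edges_pair [simp]: "edges (V, E) = E" by (simp add: edges_def)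

lemma verts_induce [simp]: "verts (induce G U) = verts G \<inter> U" by (simp add: induce_def)
lemma edges_induce [simp]: "edges (induce G U) = {e \<in> edges G. e \<subseteq> U}" by (simp add: induce_def)
lemma verts_del [simp]: "verts (del G S) = verts G - S" by (auto simp: del_def)
lemma edges_del [simp]: "edges (del G S) = {e \<in> edges G. e \<subseteq> verts G - S}" by (simp add: del_def)
lemma verts_contract [simp]: "verts (contract G B a) = (verts G - B) \<union> {a}"
  by (simp add: contract_def)
lemma edges_contract [simp]:
  "edges (contract G B a) = {e \<in> edges G. e \<inter> B = {}} \<union> {{a, v} | v. v \<in> nbhd G B}"
  by (simp add: contract_def)
lemma verts_add_edge [simp]: "verts (add_edge G a x) = verts G \<union> {a, x}" by (simp add: add_edge_def)
lemma edges_add_edge [simp]: "edges (add_edge G a x) = insert {a, x} (edges G)"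
  by (simp add: add_edge_def)
lemma verts_add_clique [simp]: "verts (add_clique G Z) = verts G" by (simp add: add_clique_def)
lemma edges_add_clique [simp]:
  "edges (add_clique G Z) = edges G \<union> {{u, v} | u v. u \<in> Z \<and> v \<in> Z \<and> u \<noteq> v}"
  by (simp add: add_clique_def)

lemma induce_UNIV [simp]: "induce G UNIV = G"
  by (simp add: induce_def verts_def edges_def)

definition subgraph :: "'a graph \<Rightarrow> 'a graph \<Rightarrow> bool" where
  "subgraph H G \<longleftrightarrow> verts H \<subseteq> verts G \<and> edges H \<subseteq> edges G"

definition graph_union :: "'a graph \<Rightarrow> 'a graph \<Rightarrow> 'a graph" where
  "graph_union G1 G2 = (verts G1 \<union> verts G2, edges G1 \<union> edges G2)"

lemma verts_graph_union [simp]: "verts (graph_union G1 G2) = verts G1 \<union> verts G2"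
  by (simp add: graph_union_def)
lemma edges_graph_union [simp]: "edges (graph_union G1 G2) = edges G1 \<union> edges G2"
  by (simp add: graph_union_def)

lemma adj_commute: "adj G u v = adj G v u"
  by (auto simp: adj_def insert_commute)

lemma rtranclp_adj_sym: "(adj G)\<^sup>*\<^sup>* u v \<Longrightarrow> (adj G)\<^sup>*\<^sup>* v u"
  by (induction rule: rtranclp_induct)
    (auto, metis adj_commute converse_rtranclp_into_rtranclp)

lemma rtranclp_map:
  assumes "R\<^sup>*\<^sup>* x y" "\<And>x y. R x y \<Longrightarrow> Q (f x) (f y)"
  shows "Q\<^sup>*\<^sup>* (f x) (f y)"
  using assms(1) by (induction rule: rtranclp_induct) (auto intro: rtranclp.rtrancl_into_rtrancl assms(2))

lemma rtranclp_adj_induce_mono: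
  assumes "(adj (induce G S))\<^sup>*\<^sup>* x y" "S \<subseteq> S'"
  shows "(adj (induce G S'))\<^sup>*\<^sup>* x y"
proof -
  have "adj (induce G S) \<le> adj (induce G S')" using assms(2) by (auto simp: adj_def)
  then show ?thesis using assms(1) rtranclp_mono by blast
qed

lemma connectedD:
  "connected G \<Longrightarrow> u \<in> verts G \<Longrightarrow> v \<in> verts G \<Longrightarrow> (adj G)\<^sup>*\<^sup>* u v"
  unfolding connected_def by blast

lemma wf_edgeE:
  assumes "wf_graph G" "e \<in> edges G"
  obtains u v where "e = {u, v}" "u \<noteq> v" "u \<in> verts G" "v \<in> verts G"
  using assms unfolding wf_graph_def by blast

lemma wf_edge_subset: "wf_graph G \<Longrightarrow> e \<in> edges G \<Longrightarrow> e \<subseteq> verts G"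
  by (erule wf_edgeE) auto

lemma wf_finite_verts: "wf_graph G \<Longrightarrow> finite (verts G)"
  unfolding wf_graph_def by simp

lemma wf_finite_edges:
  assumes "wf_graph G" shows "finite (edges G)"
proof (rule finite_subset)
  show "edges G \<subseteq> Pow (verts G)" using wf_edge_subset[OF assms] by blast
  show "finite (Pow (verts G))" using wf_finite_verts[OF assms] by simp
qed

lemma wf_graphI:
  assumes "finite (verts G)"
    and "\<And>e. e \<in> edges G \<Longrightarrow> \<exists>u v. e = {u, v} \<and> u \<noteq> v \<and> u \<in> verts G \<and> v \<in> verts G"
  shows "wf_graph G"
  using assms unfolding wf_graph_def by blast

lemma wf_induce: "wf_graph G \<Longrightarrow> wf_graph (induce G U)"
  by (rule wf_graphI) (auto simp: wf_finite_verts elim!: wf_edgeE)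

lemma wf_del: "wf_graph G \<Longrightarrow> wf_graph (del G S)"
  unfolding del_def by (rule wf_induce)

lemma wf_contract:
  assumes "wf_graph G" "a \<in> B" shows "wf_graph (contract G B a)"
proof (rule wf_graphI)
  show "finite (verts (contract G B a))" using wf_finite_verts[OF assms(1)] by simp
  fix e assume "e \<in> edges (contract G B a)"
  then consider "e \<in> edges G" "e \<inter> B = {}" | v where "e = {a, v}" "v \<in> nbhd G B" by auto
  then show "\<exists>u v. e = {u, v} \<and> u \<noteq> v \<and> u \<in> verts (contract G B a) \<and> v \<in> verts (contract G B a)"
  proof cases
    case 1
    then show ?thesis using assms(1) by (elim wf_edgeE) auto
  next
    case 2
    then show ?thesis using assms(2) by (intro exI[of _ a] exI[of _ v]) (auto simp: nbhd_def)
  qed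
qed

lemma wf_add_clique:
  assumes "wf_graph G" "Z \<subseteq> verts G" shows "wf_graph (add_clique G Z)"
  using assms by (intro wf_graphI) (auto simp: wf_finite_verts elim!: wf_edgeE)

lemma wf_add_edge:
  assumes "wf_graph G" "a \<noteq> x" shows "wf_graph (add_edge G a x)"
  using assms by (intro wf_graphI) (auto simp: wf_finite_verts elim!: wf_edgeE)

lemma wf_graph_union:
  assumes "wf_graph G1" "wf_graph G2" shows "wf_graph (graph_union G1 G2)"
  using assms by (intro wf_graphI) (auto simp: wf_finite_verts elim!: wf_edgeE)

subsection \<open>Tree decompositions and treewidth\<close>

lemma tree_decompD:
  assumes "tree_decomp G T bag"
  shows "is_tree T" "\<And>i. i \<in> verts T \<Longrightarrow> bag i \<subseteq> verts G"
    "\<And>v. v \<in> verts G \<Longrightarrow> \<exists>i\<in>verts T. v \<in> bag i"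
    "\<And>e. e \<in> edges G \<Longrightarrow> \<exists>i\<in>verts T. e \<subseteq> bag i"
    "\<And>v. v \<in> verts G \<Longrightarrow> connected (induce T {i. v \<in> bag i})"
  using assms unfolding tree_decomp_def by blast+

lemma tree_decomp_finite_bag:
  "wf_graph G \<Longrightarrow> tree_decomp G T bag \<Longrightarrow> i \<in> verts T \<Longrightarrow> finite (bag i)"
  by (meson finite_subset tree_decompD(2) wf_finite_verts)

lemma is_tree_singleton: "is_tree ({0}, {})"
  unfolding is_tree_def wf_graph_def connected_def by auto

lemma tree_decomp_singleton: "wf_graph G \<Longrightarrow> tree_decomp G ({0}, {}) (\<lambda>_. verts G)"
  unfolding tree_decomp_def using is_tree_singleton by (auto simp: connected_def wf_edge_subset)

lemma td_width_le_iff: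
  assumes "tree_decomp G T bag"
  shows "td_width T bag \<le> k \<longleftrightarrow> (\<forall>i\<in>verts T. card (bag i) \<le> Suc k)"
proof -
  have "finite (verts T)" "verts T \<noteq> {}"
    using tree_decompD(1)[OF assms] unfolding is_tree_def wf_graph_def by auto
  then have "Max ((\<lambda>i. card (bag i)) ` verts T) \<le> Suc k \<longleftrightarrow> (\<forall>i\<in>verts T. card (bag i) \<le> Suc k)"
    by (simp add: Max_le_iff)
  then show ?thesis unfolding td_width_def by linarith
qed

lemma treewidth_le:
  assumes "tree_decomp G T bag" "\<forall>i\<in>verts T. card (bag i) \<le> Suc k"
  shows "treewidth G \<le> k"
proof -
  have "treewidth G \<le> td_width T bag"
    unfolding treewidth_def by (rule Least_le) (use assms(1) in blast)
  moreover have "td_width T bag \<le> k" using assms td_width_le_iff by blast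
  ultimately show ?thesis by simp
qed

lemma tree_decomp_of_treewidth_le:
  assumes "wf_graph G" "treewidth G \<le> k"
  obtains T bag where "tree_decomp G T bag" "\<forall>i\<in>verts T. card (bag i) \<le> Suc k"
proof -
  have "\<exists>w T bag. tree_decomp G T bag \<and> td_width T bag = w"
    using tree_decomp_singleton[OF assms(1)] by blast
  then have "\<exists>T bag. tree_decomp G T bag \<and> td_width T bag = treewidth G"
    unfolding treewidth_def by (rule LeastI_ex)
  then show ?thesis using that assms(2) td_width_le_iff by fastforce
qed

lemma tree_decomp_subgraph:
  assumes "tree_decomp G T bag" "subgraph H G" "wf_graph H"
  shows "tree_decomp H T (\<lambda>i. bag i \<inter> verts H)"
  using tree_decompD[OF assms(1)] assms(2) wf_edge_subset[OF assms(3)]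
  unfolding tree_decomp_def subgraph_def by (auto 4 4)

lemma treewidth_subgraph_le:
  assumes "wf_graph G" "wf_graph H" "subgraph H G"
  shows "treewidth H \<le> treewidth G"
proof -
  obtain T bag where d: "tree_decomp G T bag" and c: "\<forall>i\<in>verts T. card (bag i) \<le> Suc (treewidth G)"
    using tree_decomp_of_treewidth_le[OF assms(1) order_refl] .
  have "card (bag i \<inter> verts H) \<le> Suc (treewidth G)" if "i \<in> verts T" for i
    using c that card_mono[OF tree_decomp_finite_bag[OF assms(1) d that], of "bag i \<inter> verts H"]
    by auto
  then show ?thesis using treewidth_le[OF tree_decomp_subgraph[OF d assms(3,2)]] by blast
qed


subsection \<open>Contracting a connected set\<close>

lemma connected_nodes_meeting_connected:
  assumes d: "tree_decomp G T bag" and U: "U \<subseteq> verts G" and c: "connected (induce G U)"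
  shows "connected (induce T {i. bag i \<inter> U \<noteq> {}})"
proof -
  let ?A = "{i. bag i \<inter> U \<noteq> {}}"
  have path: "(adj (induce T ?A))\<^sup>*\<^sup>* x y"
    if "(adj (induce G U))\<^sup>*\<^sup>* u w" "u \<in> U" "x \<in> verts T" "u \<in> bag x" "y \<in> verts T" "w \<in> bag y"
    for u w x y
    using that
  proof (induction arbitrary: y rule: rtranclp_induct)
    case base
    then have "(adj (induce T {i. u \<in> bag i}))\<^sup>*\<^sup>* x y"
      using U by (intro connectedD[OF tree_decompD(5)[OF d]]) auto
    then show ?case by (rule rtranclp_adj_induce_mono) (use base in auto)
  next
    case (step w w')
    then have e: "{w, w'} \<in> edges G" "{w, w'} \<subseteq> U" by (auto simp: adj_def)
    then obtain k where k: "k \<in> verts T" "{w, w'} \<subseteq> bag k" using tree_decompD(4)[OF d] by blast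
    have "(adj (induce T ?A))\<^sup>*\<^sup>* x k" using step k by auto
    moreover have "(adj (induce T {i. w' \<in> bag i}))\<^sup>*\<^sup>* k y"
      using e k step.prems U by (intro connectedD[OF tree_decompD(5)[OF d]]) auto
    then have "(adj (induce T ?A))\<^sup>*\<^sup>* k y" by (rule rtranclp_adj_induce_mono) (use e in auto)
    ultimately show ?case by (rule rtranclp_trans)
  qed
  show ?thesis unfolding connected_def
  proof (intro ballI)
    fix x y assume "x \<in> verts (induce T ?A)" "y \<in> verts (induce T ?A)"
    then obtain u w where uw: "u \<in> U" "u \<in> bag x" "w \<in> U" "w \<in> bag y" "x \<in> verts T" "y \<in> verts T"
      by auto
    moreover have "(adj (induce G U))\<^sup>*\<^sup>* u w" using c uw U by (intro connectedD) auto
    ultimately show "(adj (induce T ?A))\<^sup>*\<^sup>* x y" using path by blast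
  qed
qed

lemma tree_decomp_contract:
  assumes d: "tree_decomp G T bag" and U: "U \<subseteq> verts G" "a \<in> U" and c: "connected (induce G U)"
  shows "tree_decomp (contract G U a) T (\<lambda>i. if bag i \<inter> U = {} then bag i else insert a (bag i - U))"
    (is "tree_decomp ?G' T ?bag")
proof -
  note p = tree_decompD[OF d]
  show ?thesis unfolding tree_decomp_def
  proof (intro conjI ballI)
    show "is_tree T" by (rule p(1))
    show "?bag i \<subseteq> verts ?G'" if "i \<in> verts T" for i using p(2)[OF that] by auto
    show "\<exists>i\<in>verts T. v \<in> ?bag i" if "v \<in> verts ?G'" for v
      using that p(3) U by (cases "v = a") fastforce+
    show "\<exists>i\<in>verts T. e \<subseteq> ?bag i" if "e \<in> edges ?G'" for e
    proof -
      from that consider "e \<in> edges G" "e \<inter> U = {}" | v where "e = {a, v}" "v \<in> nbhd G U" by auto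
      then show ?thesis
      proof cases
        case 1
        then show ?thesis using p(4) by fastforce
      next
        case 2
        then obtain u where "u \<in> U" "{u, v} \<in> edges G" "v \<notin> U" by (auto simp: nbhd_def adj_def)
        then show ?thesis using p(4) 2(1) by fastforce
      qed
    qed
    show "connected (induce T {i. v \<in> ?bag i})" if "v \<in> verts ?G'" for v
    proof (cases "v = a")
      case True
      then have "{i. v \<in> ?bag i} = {i. bag i \<inter> U \<noteq> {}}" using U(2) by auto
      then show ?thesis using connected_nodes_meeting_connected[OF d U(1) c] by simp
    next
      case False
      then have "v \<in> verts G" "{i. v \<in> ?bag i} = {i. v \<in> bag i}" using that by auto
      then show ?thesis using p(5) by simp
    qed
  qed
qed

lemma treewidth_contract_le:
  assumes w: "wf_graph G" and U: "U \<subseteq> verts G" "a \<in> U" and c: "connected (induce G U)"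
  shows "treewidth (contract G U a) \<le> treewidth G"
proof -
  obtain T bag where d: "tree_decomp G T bag" and b: "\<forall>i\<in>verts T. card (bag i) \<le> Suc (treewidth G)"
    using tree_decomp_of_treewidth_le[OF w order_refl] .
  have "card (insert a (bag i - U)) \<le> card (bag i)" if "i \<in> verts T" "bag i \<inter> U \<noteq> {}" for i
  proof -
    have "finite (bag i)" by (rule tree_decomp_finite_bag[OF w d that(1)])
    moreover have "card (bag i - U) < card (bag i)"
      using that(2) by (intro psubset_card_mono[OF \<open>finite (bag i)\<close>]) blast
    ultimately show ?thesis by (simp add: card_insert_if)
  qed
  then show ?thesis
    using b by (intro treewidth_le[OF tree_decomp_contract[OF d U c]]) (auto intro: le_trans)
qed


subsection \<open>Gluing along a small clique\<close>

text \<open>Tree nodes are natural numbers, so the two trees are joined after renumbering the nodes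
  of the first one by even and those of the second one by odd numbers.\<close>

definition left_node :: "nat \<Rightarrow> nat" where "left_node i = 2 * i"
definition right_node :: "nat \<Rightarrow> nat" where "right_node i = 2 * i + 1"

lemma left_node_eq_iff [simp]: "left_node i = left_node j \<longleftrightarrow> i = j"
  by (simp add: left_node_def)
lemma right_node_eq_iff [simp]: "right_node i = right_node j \<longleftrightarrow> i = j"
  by (simp add: right_node_def)
lemma left_node_neq_right_node [simp]: "left_node i \<noteq> right_node j" "right_node j \<noteq> left_node i"
  by (simp_all add: left_node_def right_node_def) presburger+

lemma left_node_div_2 [simp]: "even (left_node i)" "left_node i div 2 = i"
  by (simp_all add: left_node_def)
lemma right_node_div_2 [simp]: "odd (right_node i)" "right_node i div 2 = i"
  by (simp_all add: right_node_def)

lemma inj_left_node: "inj left_node" by (simp add: inj_def)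
lemma inj_right_node: "inj right_node" by (simp add: inj_def)

lemma Collect_left_right_node:
  "{j. P j} = left_node ` {i. P (left_node i)} \<union> right_node ` {i. P (right_node i)}"
proof -
  have "j = left_node (j div 2) \<or> j = right_node (j div 2)" for j
    by (simp add: left_node_def right_node_def) presburger
  then show ?thesis by auto (metis (mono_tags) image_eqI mem_Collect_eq)
qed

definition tree_join :: "nat graph \<Rightarrow> nat graph \<Rightarrow> nat \<Rightarrow> nat \<Rightarrow> nat graph" where
  "tree_join T1 T2 i1 i2 = (left_node ` verts T1 \<union> right_node ` verts T2,
     image left_node ` edges T1 \<union> image right_node ` edges T2 \<union> {{left_node i1, right_node i2}})"

lemma verts_tree_join [simp]:
  "verts (tree_join T1 T2 i1 i2) = left_node ` verts T1 \<union> right_node ` verts T2"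
  by (simp add: tree_join_def)

lemma edges_tree_join [simp]:
  "edges (tree_join T1 T2 i1 i2) =
     image left_node ` edges T1 \<union> image right_node ` edges T2 \<union> {{left_node i1, right_node i2}}"
  by (simp add: tree_join_def)

lemma adj_tree_join_left:
  assumes "adj (induce T1 S1) x y"
  shows "adj (induce (tree_join T1 T2 i1 i2) (left_node ` S1 \<union> S)) (left_node x) (left_node y)"
proof -
  have xy: "x \<noteq> y" "{x, y} \<in> edges T1" "x \<in> S1" "y \<in> S1" using assms by (auto simp: adj_def)
  have "left_node ` {x, y} \<in> image left_node ` edges T1" using xy(2) by (rule imageI)
  then have "{left_node x, left_node y} \<in> edges (tree_join T1 T2 i1 i2)" by simp
  then show ?thesis using xy by (simp add: adj_def)
qed

lemma adj_tree_join_right: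
  assumes "adj (induce T2 S2) x y"
  shows "adj (induce (tree_join T1 T2 i1 i2) (S \<union> right_node ` S2)) (right_node x) (right_node y)"
proof -
  have xy: "x \<noteq> y" "{x, y} \<in> edges T2" "x \<in> S2" "y \<in> S2" using assms by (auto simp: adj_def)
  have "right_node ` {x, y} \<in> image right_node ` edges T2" using xy(2) by (rule imageI)
  then have "{right_node x, right_node y} \<in> edges (tree_join T1 T2 i1 i2)" by simp
  then show ?thesis using xy by (simp add: adj_def)
qed

lemma connected_induce_tree_join:
  assumes c1: "connected (induce T1 S1)" and c2: "connected (induce T2 S2)"
    and link: "verts T1 \<inter> S1 \<noteq> {} \<Longrightarrow> verts T2 \<inter> S2 \<noteq> {} \<Longrightarrow>
      i1 \<in> verts T1 \<inter> S1 \<and> i2 \<in> verts T2 \<inter> S2"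
  shows "connected (induce (tree_join T1 T2 i1 i2) (left_node ` S1 \<union> right_node ` S2))"
proof -
  let ?T = "tree_join T1 T2 i1 i2" and ?S = "left_node ` S1 \<union> right_node ` S2"
  let ?R = "adj (induce ?T ?S)"
  have left: "?R\<^sup>*\<^sup>* (left_node x) (left_node y)" if "x \<in> verts T1 \<inter> S1" "y \<in> verts T1 \<inter> S1" for x y
  proof -
    have "(adj (induce T1 S1))\<^sup>*\<^sup>* x y" using c1 that by (intro connectedD) auto
    then show ?thesis by (rule rtranclp_map) (rule adj_tree_join_left)
  qed
  have right: "?R\<^sup>*\<^sup>* (right_node x) (right_node y)" if "x \<in> verts T2 \<inter> S2" "y \<in> verts T2 \<inter> S2" for x y
  proof -
    have "(adj (induce T2 S2))\<^sup>*\<^sup>* x y" using c2 that by (intro connectedD) auto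
    then show ?thesis by (rule rtranclp_map) (rule adj_tree_join_right)
  qed
  have across: "?R\<^sup>*\<^sup>* (left_node x) (right_node y)" if "x \<in> verts T1 \<inter> S1" "y \<in> verts T2 \<inter> S2" for x y
  proof -
    have i: "i1 \<in> verts T1 \<inter> S1" "i2 \<in> verts T2 \<inter> S2" using link that by blast+
    then have "?R (left_node i1) (right_node i2)" by (simp add: adj_def)
    then show ?thesis using left[OF that(1) i(1)] right[OF i(2) that(2)]
      by (meson converse_rtranclp_into_rtranclp rtranclp_trans)
  qed
  have cases: "(\<exists>x \<in> verts T1 \<inter> S1. u = left_node x) \<or> (\<exists>y \<in> verts T2 \<inter> S2. u = right_node y)"
    if "u \<in> verts (induce ?T ?S)" for u
    using that by auto
  show ?thesis unfolding connected_def
  proof (intro ballI)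
    fix u w assume "u \<in> verts (induce ?T ?S)" "w \<in> verts (induce ?T ?S)"
    with cases show "?R\<^sup>*\<^sup>* u w"
      using left right across rtranclp_adj_sym by metis
  qed
qed

lemma is_tree_tree_join:
  assumes t1: "is_tree T1" and t2: "is_tree T2" and i: "i1 \<in> verts T1" "i2 \<in> verts T2"
  shows "is_tree (tree_join T1 T2 i1 i2)"
proof -
  let ?T = "tree_join T1 T2 i1 i2"
  have w1: "wf_graph T1" and w2: "wf_graph T2" using t1 t2 unfolding is_tree_def by auto
  have fv1: "finite (verts T1)" and fv2: "finite (verts T2)" using w1 w2 by (simp_all add: wf_finite_verts)
  have wf: "wf_graph ?T"
  proof (rule wf_graphI)
    show "finite (verts ?T)" using fv1 fv2 by simp
    fix e assume "e \<in> edges ?T"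
    then consider e' where "e' \<in> edges T1" "e = left_node ` e'"
      | e' where "e' \<in> edges T2" "e = right_node ` e'" | "e = {left_node i1, right_node i2}"
      unfolding tree_join_def by auto
    then show "\<exists>u v. e = {u, v} \<and> u \<noteq> v \<and> u \<in> verts ?T \<and> v \<in> verts ?T"
    proof cases
      case 1
      then show ?thesis using w1 by (elim wf_edgeE) (auto intro!: exI[of _ "left_node _"])
    next
      case 2
      then show ?thesis using w2 by (elim wf_edgeE) (auto intro!: exI[of _ "right_node _"])
    next
      case 3
      then show ?thesis
        using i by (intro exI[of _ "left_node i1"] exI[of _ "right_node i2"]) auto
    qed
  qed
  have "connected (induce ?T (left_node ` UNIV \<union> right_node ` UNIV))"
    using t1 t2 i unfolding is_tree_def by (intro connected_induce_tree_join) auto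
  then have conn: "connected ?T" using Collect_left_right_node[of "\<lambda>_. True"] by simp
  have "left_node ` verts T1 \<inter> right_node ` verts T2 = {}" by auto
  then have cv: "card (verts ?T) = card (verts T1) + card (verts T2)"
    using fv1 fv2 by (simp add: card_Un_disjoint card_image inj_on_def)
  have ce: "card (edges ?T) = card (edges T1) + card (edges T2) + 1"
  proof -
    have disj: "image left_node ` edges T1 \<inter> image right_node ` edges T2 = {}"
    proof (rule ccontr)
      assume "\<not> ?thesis"
      then obtain e1 e2 where "e1 \<in> edges T1" "e2 \<in> edges T2" "left_node ` e1 = right_node ` e2" by blast
      moreover then obtain x where "x \<in> e1" using w1 by (blast elim: wf_edgeE)
      ultimately show False by (metis image_eqI imageE left_node_neq_right_node(1))
    qed
    have new: "{left_node i1, right_node i2} \<notin> image left_node ` edges T1 \<union> image right_node ` edges T2"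
      by (auto, metis image_iff insertI1 insertI2 left_node_neq_right_node(1),
          metis image_iff insertI1 left_node_neq_right_node(1))
    have "card (image left_node ` edges T1) = card (edges T1)"
      by (rule card_image) (simp add: inj_on_def inj_image_eq_iff[OF inj_left_node])
    moreover have "card (image right_node ` edges T2) = card (edges T2)"
      by (rule card_image) (simp add: inj_on_def inj_image_eq_iff[OF inj_right_node])
    ultimately show ?thesis unfolding tree_join_def using disj new wf_finite_edges[OF w1] wf_finite_edges[OF w2]
      by (simp add: card_Un_disjoint)
  qed
  have "card (verts T1) \<ge> 1" "card (verts T2) \<ge> 1" using fv1 fv2 i by (auto simp: Suc_le_eq card_gt_0_iff)
  then have "card (edges ?T) = card (verts ?T) - 1" using ce cv t1 t2 unfolding is_tree_def by simp
  then show ?thesis unfolding is_tree_def using wf conn i by auto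
qed

lemma connected_empty: "verts G = {} \<Longrightarrow> connected G"
  by (simp add: connected_def)

lemma tree_decomp_graph_union:
  assumes d1: "tree_decomp G1 T1 bag1" and d2: "tree_decomp G2 T2 bag2"
    and i: "i1 \<in> verts T1" "i2 \<in> verts T2"
    and K: "verts G1 \<inter> verts G2 \<subseteq> bag1 i1" "verts G1 \<inter> verts G2 \<subseteq> bag2 i2"
  shows "tree_decomp (graph_union G1 G2) (tree_join T1 T2 i1 i2)
    (\<lambda>j. if even j then bag1 (j div 2) else bag2 (j div 2))" (is "tree_decomp _ ?T ?bag")
proof -
  note p1 = tree_decompD[OF d1] and p2 = tree_decompD[OF d2]
  have c1: "connected (induce T1 {i. v \<in> bag1 i})" for v
  proof (cases "v \<in> verts G1")
    case False
    then have "verts (induce T1 {i. v \<in> bag1 i}) = {}" using p1(2) by auto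
    then show ?thesis by (rule connected_empty)
  qed (rule p1(5))
  have c2: "connected (induce T2 {i. v \<in> bag2 i})" for v
  proof (cases "v \<in> verts G2")
    case False
    then have "verts (induce T2 {i. v \<in> bag2 i}) = {}" using p2(2) by auto
    then show ?thesis by (rule connected_empty)
  qed (rule p2(5))
  show ?thesis unfolding tree_decomp_def
  proof (intro conjI ballI)
    show "is_tree ?T" by (rule is_tree_tree_join[OF p1(1) p2(1) i])
    show "?bag j \<subseteq> verts (graph_union G1 G2)" if "j \<in> verts ?T" for j
      using that by (auto dest!: p1(2) p2(2))
    show "\<exists>j\<in>verts ?T. v \<in> ?bag j" if "v \<in> verts (graph_union G1 G2)" for v
    proof -
      have "v \<in> verts G1 \<or> v \<in> verts G2" using that by simp
      then show ?thesis
      proof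
        assume "v \<in> verts G1"
        then obtain i where "i \<in> verts T1" "v \<in> bag1 i" using p1(3) by blast
        then show ?thesis by (intro bexI[of _ "left_node i"]) simp_all
      next
        assume "v \<in> verts G2"
        then obtain i where "i \<in> verts T2" "v \<in> bag2 i" using p2(3) by blast
        then show ?thesis by (intro bexI[of _ "right_node i"]) simp_all
      qed
    qed
    show "\<exists>j\<in>verts ?T. e \<subseteq> ?bag j" if "e \<in> edges (graph_union G1 G2)" for e
    proof -
      have "e \<in> edges G1 \<or> e \<in> edges G2" using that by simp
      then show ?thesis
      proof
        assume "e \<in> edges G1"
        then obtain i where "i \<in> verts T1" "e \<subseteq> bag1 i" using p1(4) by blast
        then show ?thesis by (intro bexI[of _ "left_node i"]) simp_all
      next
        assume "e \<in> edges G2"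
        then obtain i where "i \<in> verts T2" "e \<subseteq> bag2 i" using p2(4) by blast
        then show ?thesis by (intro bexI[of _ "right_node i"]) simp_all
      qed
    qed
    show "connected (induce ?T {j. v \<in> ?bag j})" for v
    proof -
      have "connected (induce ?T (left_node ` {i. v \<in> bag1 i} \<union> right_node ` {i. v \<in> bag2 i}))"
        using c1 c2 p1(2) p2(2) K i by (intro connected_induce_tree_join) blast+
      then show ?thesis using Collect_left_right_node[of "\<lambda>j. v \<in> ?bag j"] by simp
    qed
  qed
qed

lemma tree_decomp_bag_cover:
  assumes d: "tree_decomp G T bag" and K: "finite K" "K \<subseteq> verts G" "card K \<le> 1 \<or> K \<in> edges G"
  shows "\<exists>i\<in>verts T. K \<subseteq> bag i"
proof (cases "K \<in> edges G")
  case True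
  then show ?thesis using tree_decompD(4)[OF d] by blast
next
  case False
  then have "K = {} \<or> (\<exists>x. K = {x})" using K by (auto simp: le_Suc_eq card_1_singleton_iff)
  moreover have "verts T \<noteq> {}" using tree_decompD(1)[OF d] unfolding is_tree_def by blast
  ultimately show ?thesis using tree_decompD(3)[OF d] K(2) by auto
qed

lemma treewidth_graph_union_le:
  assumes w: "wf_graph G1" "wf_graph G2" and tw: "treewidth G1 \<le> k" "treewidth G2 \<le> k"
    and K: "card (verts G1 \<inter> verts G2) \<le> 1 \<or> verts G1 \<inter> verts G2 \<in> edges G1 \<inter> edges G2"
  shows "treewidth (graph_union G1 G2) \<le> k"
proof -
  obtain T1 bag1 where d1: "tree_decomp G1 T1 bag1" and b1: "\<forall>i\<in>verts T1. card (bag1 i) \<le> Suc k"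
    using tree_decomp_of_treewidth_le[OF w(1) tw(1)] .
  obtain T2 bag2 where d2: "tree_decomp G2 T2 bag2" and b2: "\<forall>i\<in>verts T2. card (bag2 i) \<le> Suc k"
    using tree_decomp_of_treewidth_le[OF w(2) tw(2)] .
  have fin: "finite (verts G1 \<inter> verts G2)" using wf_finite_verts[OF w(1)] by simp
  obtain i1 where i1: "i1 \<in> verts T1" "verts G1 \<inter> verts G2 \<subseteq> bag1 i1"
    using tree_decomp_bag_cover[OF d1 fin _] K by blast
  obtain i2 where i2: "i2 \<in> verts T2" "verts G1 \<inter> verts G2 \<subseteq> bag2 i2"
    using tree_decomp_bag_cover[OF d2 fin _] K by blast
  show ?thesis
    using b1 b2 by (intro treewidth_le[OF tree_decomp_graph_union[OF d1 d2 i1(1) i2(1) i1(2) i2(2)]])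
      auto
qed


subsection \<open>Contracting a block\<close>

lemma solution_contract_of_solution:
  assumes w: "wf_graph G" and aB: "a \<in> B" and BV: "B \<subseteq> verts G" and cB: "connected (induce G B)"
    and sol: "solution G t S"
  shows "\<exists>S'. solution (contract G B a) t S'"
proof -
  have SV: "S \<subseteq> verts G" and cS: "card S \<le> t" and twS: "treewidth (del G S) \<le> 2"
    using sol unfolding solution_def by auto
  have wG': "wf_graph (contract G B a)" by (rule wf_contract[OF w aB])
  show ?thesis
  proof (cases "S \<inter> B = {}")
    case True
    have "induce (del G S) B = induce G B"
      using True wf_edge_subset[OF w] by (auto simp: induce_def)
    then have "treewidth (contract (del G S) B a) \<le> treewidth (del G S)"
      using True BV aB cB by (intro treewidth_contract_le wf_del[OF w]) auto
    moreover have "subgraph (del (contract G B a) S) (contract (del G S) B a)"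
      unfolding subgraph_def
    proof
      show "verts (del (contract G B a) S) \<subseteq> verts (contract (del G S) B a)" by auto
      show "edges (del (contract G B a) S) \<subseteq> edges (contract (del G S) B a)"
      proof
        fix e assume e: "e \<in> edges (del (contract G B a) S)"
        then have eS: "e \<inter> S = {}" by auto
        from e consider "e \<in> edges G" "e \<inter> B = {}" | v where "e = {a, v}" "v \<in> nbhd G B" by auto
        then show "e \<in> edges (contract (del G S) B a)"
        proof cases
          case 1
          then show ?thesis using eS wf_edge_subset[OF w 1(1)] by auto
        next
          case 2
          then have "v \<in> nbhd (del G S) B" using eS True BV by (auto simp: nbhd_def adj_def)
          then show ?thesis using 2(1) by auto
        qed
      qed
    qed
    then have "treewidth (del (contract G B a) S) \<le> treewidth (contract (del G S) B a)"
      by (intro treewidth_subgraph_le wf_contract[OF wf_del[OF w] aB] wf_del[OF wG'])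
    ultimately have "solution (contract G B a) t S"
      using SV cS twS True unfolding solution_def by auto
    then show ?thesis ..
  next
    case False
    have fS: "finite S" using SV wf_finite_verts[OF w] by (rule finite_subset)
    have "card (S - B) < card S" using False by (intro psubset_card_mono[OF fS]) blast
    then have "card (insert a (S - B)) \<le> t" using cS fS by (simp add: card_insert_if)
    moreover have "subgraph (del (contract G B a) (insert a (S - B))) (del G S)"
      using wf_edge_subset[OF w] by (auto simp: subgraph_def)
    then have "treewidth (del (contract G B a) (insert a (S - B))) \<le> treewidth (del G S)"
      by (intro treewidth_subgraph_le wf_del[OF w] wf_del[OF wG'])
    ultimately have "solution (contract G B a) t (insert a (S - B))"
      using SV aB BV twS unfolding solution_def by auto
    then show ?thesis ..
  qed
qed

lemma solution_del_of_solution_contract: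
  assumes w: "wf_graph G" and aB: "a \<in> B" and sol: "solution (contract G B a) t S"
  shows "solution (del G B) t (S - {a})"
  unfolding solution_def
proof (intro conjI)
  have wG': "wf_graph (contract G B a)" by (rule wf_contract[OF w aB])
  show "S - {a} \<subseteq> verts (del G B)" using sol by (auto simp: solution_def)
  show "card (S - {a}) \<le> t" using sol card_Diff1_le[of S a] by (auto simp: solution_def)
  have "subgraph (del (del G B) (S - {a})) (del (contract G B a) S)"
    using aB by (auto simp: subgraph_def)
  then have "treewidth (del (del G B) (S - {a})) \<le> treewidth (del (contract G B a) S)"
    by (intro treewidth_subgraph_le wf_del wG' w)
  then show "treewidth (del (del G B) (S - {a})) \<le> 2" using sol by (simp add: solution_def)
qed

text \<open>The part of \<open>G - S\<close> not seen by the contracted graph: the block together with the set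
  \<open>R\<close> of its surviving private neighbours, where \<open>a\<close> is made adjacent to \<open>R\<close> so that
  the two parts meet in a clique.\<close>

definition block_attachment :: "'a graph \<Rightarrow> 'a set \<Rightarrow> 'a \<Rightarrow> 'a set \<Rightarrow> 'a graph" where
  "block_attachment G B a R = add_clique (induce G (B \<union> R)) (insert a R)"

lemma wf_block_attachment:
  assumes "wf_graph G" "a \<in> B" "B \<subseteq> verts G" "R \<subseteq> verts G"
  shows "wf_graph (block_attachment G B a R)"
  unfolding block_attachment_def using assms by (intro wf_add_clique wf_induce) auto

lemma treewidth_block_attachment_le:
  assumes w: "wf_graph G" and aB: "a \<in> B" and BV: "B \<subseteq> verts G"
    and twB: "treewidth (induce G B) \<le> 2"
    and hyp: "\<forall>x \<in> nbhd G (B - {a}) - {a}. treewidth (add_edge (induce G (B \<union> {x})) a x) \<le> 2"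
    and R: "R \<subseteq> nbhd G (B - {a}) - {a}" "card R \<le> 1"
  shows "treewidth (block_attachment G B a R) \<le> 2"
proof -
  have RV: "R \<subseteq> verts G" using R(1) by (auto simp: nbhd_def)
  then have fR: "finite R" using wf_finite_verts[OF w] by (rule finite_subset)
  have wA: "wf_graph (block_attachment G B a R)" by (rule wf_block_attachment[OF w aB BV RV])
  consider "R = {}" | x where "R = {x}" using R(2) fR by (auto simp: le_Suc_eq card_1_singleton_iff)
  then show ?thesis
  proof cases
    case 1
    then have "subgraph (block_attachment G B a R) (induce G B)"
      by (auto simp: subgraph_def block_attachment_def)
    then show ?thesis using twB treewidth_subgraph_le[OF wf_induce[OF w] wA] by fastforce
  next
    case 2
    then have x: "x \<in> nbhd G (B - {a}) - {a}" using R(1) by blast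
    have "subgraph (block_attachment G B a R) (add_edge (induce G (B \<union> {x})) a x)"
      using 2 by (auto simp: subgraph_def block_attachment_def)
    moreover have "wf_graph (add_edge (induce G (B \<union> {x})) a x)"
      using x by (intro wf_add_edge wf_induce w) auto
    ultimately have "treewidth (block_attachment G B a R) \<le> treewidth (add_edge (induce G (B \<union> {x})) a x)"
      using wA by (intro treewidth_subgraph_le)
    then show ?thesis using bspec[OF hyp x] by linarith
  qed
qed


lemma contract_block_attachment_interface:
  assumes w: "wf_graph G" and aB: "a \<in> B" and BV: "B \<subseteq> verts G"
    and R: "R \<subseteq> nbhd G (B - {a}) - {a}" "R \<inter> S = {}" "card R \<le> 1"
  defines "G1 \<equiv> del (contract G B a) S" and "G2 \<equiv> del (block_attachment G B a R) S"
  shows "card (verts G1 \<inter> verts G2) \<le> 1 \<or> verts G1 \<inter> verts G2 \<in> edges G1 \<inter> edges G2"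
proof -
  have RB: "R \<subseteq> verts G - B" using R(1) by (auto simp: nbhd_def)
  have "finite R" using RB wf_finite_verts[OF w] by (meson finite_Diff finite_subset)
  have I: "verts G1 \<inter> verts G2 = insert a R - S"
    using RB aB BV R(2) by (auto simp: G1_def G2_def block_attachment_def)
  consider "a \<in> S" | "R = {}" | x where "a \<notin> S" "R = {x}"
    using R(3) \<open>finite R\<close> by (auto simp: le_Suc_eq card_1_singleton_iff)
  then show ?thesis
  proof cases
    case 1
    then show ?thesis using I R(2,3) by (simp add: Diff_triv insert_Diff_if)
  next
    case 2
    then show ?thesis using I card_mono[of "{a}" "{a} - S"] by auto
  next
    case 3
    then have x: "x \<in> nbhd G B" "x \<notin> S" "x \<noteq> a" using R(1,2) by (auto simp: nbhd_def)
    then have "{a, x} \<in> edges G1" using aB 3(1) by (auto simp: G1_def nbhd_def)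
    moreover have "{a, x} \<in> edges G2"
      using 3 x aB BV RB by (auto simp: G2_def block_attachment_def)
    moreover have "insert a R - S = {a, x}" using 3 x by auto
    ultimately show ?thesis using I by simp
  qed
qed

lemma del_subgraph_union_contract_block_attachment:
  fixes S :: "'a set"
  assumes w: "wf_graph G" and aB: "a \<in> B" and BV: "B \<subseteq> verts G"
  defines "R \<equiv> nbhd G (B - {a}) - {a} - S"
  shows "subgraph (del G S) (graph_union (del (contract G B a) S) (del (block_attachment G B a R) S))"
    (is "subgraph _ (graph_union ?G1 ?G2)")
proof -
  have covered: "{u, v} \<in> edges ?G1 \<union> edges ?G2"
    if uv: "{u, v} \<in> edges G" "{u, v} \<subseteq> verts G - S" "u \<noteq> v" "u \<in> B" for u v
  proof (cases "v \<in> B")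
    case True
    then show ?thesis using uv BV by (auto simp: block_attachment_def)
  next
    case False
    show ?thesis
    proof (cases "u = a")
      case True
      then have "v \<in> nbhd G B" using uv False by (auto simp: nbhd_def adj_def)
      then show ?thesis using True uv False by auto
    next
      case False
      then have "v \<in> R" using uv aB \<open>v \<notin> B\<close> by (auto simp: R_def nbhd_def adj_def)
      then show ?thesis using uv BV by (auto simp: block_attachment_def)
    qed
  qed
  show ?thesis unfolding subgraph_def
  proof
    show "verts (del G S) \<subseteq> verts (graph_union ?G1 ?G2)" using BV by (auto simp: block_attachment_def)
    show "edges (del G S) \<subseteq> edges (graph_union ?G1 ?G2)"
    proof
      fix e assume e: "e \<in> edges (del G S)"
      then obtain u v where uv: "e = {u, v}" "u \<noteq> v" by (auto elim: wf_edgeE[OF w])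
      consider "e \<inter> B = {}" | "u \<in> B" | "v \<in> B" using uv by auto
      then show "e \<in> edges (graph_union ?G1 ?G2)"
      proof cases
        case 1
        then show ?thesis using e by auto
      next
        case 2
        then show ?thesis using covered[of u v] e uv by auto
      next
        case 3
        then show ?thesis using covered[of v u] e uv by (auto simp: insert_commute)
      qed
    qed
  qed
qed

lemma solution_of_solution_contract:
  assumes w: "wf_graph G" and aB: "a \<in> B" and BV: "B \<subseteq> verts G"
    and twB: "treewidth (induce G B) \<le> 2"
    and hyp: "\<forall>x \<in> nbhd G (B - {a}) - {a}. treewidth (add_edge (induce G (B \<union> {x})) a x) \<le> 2"
    and lim: "card (nbhd G (B - {a}) - {a} - S) \<le> 1"
    and sol: "solution (contract G B a) t S"
  shows "solution G t S"
proof -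
  define R where "R = nbhd G (B - {a}) - {a} - S"
  let ?G1 = "del (contract G B a) S" and ?G2 = "del (block_attachment G B a R) S"
  have RV: "R \<subseteq> verts G" by (auto simp: R_def nbhd_def)
  have w1: "wf_graph ?G1" by (intro wf_del wf_contract w aB)
  have w2: "wf_graph ?G2" by (intro wf_del wf_block_attachment w aB BV RV)
  have "treewidth ?G2 \<le> treewidth (block_attachment G B a R)"
    by (intro treewidth_subgraph_le wf_block_attachment w aB BV RV w2) (auto simp: subgraph_def)
  also have "\<dots> \<le> 2"
    using lim by (intro treewidth_block_attachment_le w aB BV twB hyp) (auto simp: R_def)
  finally have "treewidth (graph_union ?G1 ?G2) \<le> 2"
    using sol lim by (intro treewidth_graph_union_le w1 w2 contract_block_attachment_interface w aB BV)
      (auto simp: solution_def R_def)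
  moreover have "subgraph (del G S) (graph_union ?G1 ?G2)"
    unfolding R_def by (rule del_subgraph_union_contract_block_attachment[OF w aB BV])
  then have "treewidth (del G S) \<le> treewidth (graph_union ?G1 ?G2)"
    by (intro treewidth_subgraph_le wf_graph_union w1 w2 wf_del w)
  ultimately have "treewidth (del G S) \<le> 2" by linarith
  then show ?thesis using sol aB BV by (auto simp: solution_def)
qed


lemma mem_block_if_adj_bc_tree:
  assumes "adj (bc_tree H) (Inr B) (Inl a)"
  shows "a \<in> B"
  using assms by (auto simp: adj_def bc_tree_def doubleton_eq_iff)

lemma block_of_component_of_modulator:
  assumes w: "wf_graph G" and X: "modulator G X" and C: "component (del G X) C"
    and B: "is_block (induce G C) B"
  shows "B \<subseteq> verts G" "connected (induce G B)" "treewidth (induce G B) \<le> 2"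
proof -
  have BC: "B \<subseteq> C" and CX: "C \<subseteq> verts G - X"
    using B C unfolding is_block_def component_def by auto
  then show "B \<subseteq> verts G" by blast
  have "induce (induce G C) B = induce G B" using BC by (auto simp: induce_def)
  then show "connected (induce G B)" using B unfolding is_block_def biconnected_def by simp
  have "subgraph (induce G B) (del G X)" using BC CX by (auto simp: subgraph_def)
  then have "treewidth (induce G B) \<le> treewidth (del G X)"
    by (intro treewidth_subgraph_le wf_del wf_induce w)
  then show "treewidth (induce G B) \<le> 2" using X unfolding modulator_def by linarith
qed

theorem mainTheorem16:
  fixes G :: "'a graph" and t :: nat and X C B :: "'a set" and a :: 'a
  assumes "wf_graph G"
    and "\<not> trivial_inst G t"
    and "modulator G X"
    and "component (del G X) C"
    and "is_block (induce G C) B"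
    and "Inr B \<in> verts (bc_tree (induce G C))"
    and "{n. adj (bc_tree (induce G C)) (Inr B) n} = {Inl a}"
    and "limit1 (del G B) t (nbhd G (B - {a}) - {a})"
    and "\<forall>x \<in> nbhd G (B - {a}) - {a}. treewidth (add_edge (induce G (B \<union> {x})) a x) \<le> 2"
  shows "(\<exists>S. solution G t S) \<longleftrightarrow> (\<exists>S. solution (contract G B a) t S)"
proof
  note w = assms(1)
  have aB: "a \<in> B" using assms(7) by (intro mem_block_if_adj_bc_tree) blast
  note B = block_of_component_of_modulator[OF w assms(3-5)]
  show "\<exists>S. solution (contract G B a) t S" if "\<exists>S. solution G t S"
    using that solution_contract_of_solution[OF w aB B(1,2)] by blast
  show "\<exists>S. solution G t S" if "\<exists>S. solution (contract G B a) t S"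
  proof -
    from that obtain S where sol: "solution (contract G B a) t S" by blast
    then have "card (nbhd G (B - {a}) - {a} - (S - {a})) \<le> 1"
      using assms(8) solution_del_of_solution_contract[OF w aB] unfolding limit1_def by blast
    moreover have "nbhd G (B - {a}) - {a} - (S - {a}) = nbhd G (B - {a}) - {a} - S" by blast
    ultimately have "solution G t S"
      using solution_of_solution_contract[OF w aB B(1,3) assms(9) _ sol] by simp
    then show ?thesis ..
  qed
qed

end
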